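(* Let $h$ be the histogram of a distribution and let $S$ be a faithful set of $n$ samples from it. For each integer $1\le j<\log^2 n$, let $S_j$ be the multiset of true probabilities of the domain elements occurring exactly $j$ times in $S$, and let $\sigma_j$ be the sum over $S_j$ (with multiplicity) of each element's distance from a median of $S_j$. Then $$\sum_{1\le j<\log^2 n}\big|\sigma_j-dev_{j,n}(h,m_{h,j,n})\big|=O(\log^{-2}n),$$ where the implicit constant does not depend on $h$ or $S$.
   Context: $\log$ is natural; $poi(\lambda,j)=e^{-\lambda}\lambda^j/j!$. The histogram $h$ gives the number $h(x)$ of domain elements of probability $x$. Faithful: with buckets as follows—for an integer $k\ge0$, bucket $k$ consists of histogram entries with probabilities in $(\frac{k}{n\log^2n},\frac{k+1}{n\log^2n}]$, $B_{poi}(j,k)=\sum_{x \text{ in bucket }k, h(x)\neq0}h(x)poi(nx,j)$, and $B_S(j,k)$ is the number of domain elements in bucket $k$ seen exactly $j$ times in $S$—a set $S$ of $n$ samples is faithful if (1) each domain element of probability $x$ appears $j$ times with $|nx-j|<\max\{\log^{1.5}n,\sqrt{nx\log^{1.5}n}\}$, and (2) for each $j<\log^2n$ and each $k$, $|B_{poi}(j,k)-B_S(j,k)|<n^{0.6}$. Poisson-weighted median: let $S_h$ be the multiset containing $h(x)$ copies of each probability $x$; weight each element $x$ of $S_h$ by $poi(nx,j)$; $m_{h,j,n}$ is a median of this weighted multiset, i.e. a number $m$ such that at most half the total weight lies on numbers greater than $m$ and at most half on numbers less than $m$. For a real $m$, $dev_{j,n}(h,m)=\sum_{x:h(x)\neq0}|x-m|\,h(x)\,poi(nx,j)$.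 *)

theory Defs
  imports "HOL-Analysis.Analysis" "HOL-Library.Multiset"
begin

definition poi :: "real \<Rightarrow> nat \<Rightarrow> real" where
  "poi lam j = exp (- lam) * lam ^ j / fact j"

definition is_distribution :: "nat set \<Rightarrow> (nat \<Rightarrow> real) \<Rightarrow> bool" where
  "is_distribution D p \<longleftrightarrow> finite D \<and> (\<forall>a\<in>D. p a > 0) \<and> (\<Sum>a\<in>D. p a) = 1"

definition hist :: "nat set \<Rightarrow> (nat \<Rightarrow> real) \<Rightarrow> real \<Rightarrow> nat" where
  "hist D p x = card {a\<in>D. p a = x}"

definition in_bucket :: "nat \<Rightarrow> nat \<Rightarrow> real \<Rightarrow> bool" where
  "in_bucket n k x \<longleftrightarrow>
     real k / (real n * (ln (real n))\<^sup>2) < x \<and> x \<le> (real k + 1) / (real n * (ln (real n))\<^sup>2)"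

definition B_poi :: "(real \<Rightarrow> nat) \<Rightarrow> nat \<Rightarrow> nat \<Rightarrow> nat \<Rightarrow> real" where
  "B_poi h n j k = (\<Sum>x\<in>{x. in_bucket n k x \<and> h x \<noteq> 0}. real (h x) * poi (real n * x) j)"

definition B_S :: "nat set \<Rightarrow> (nat \<Rightarrow> real) \<Rightarrow> nat list \<Rightarrow> nat \<Rightarrow> nat \<Rightarrow> nat \<Rightarrow> nat" where
  "B_S D p S n j k = card {a\<in>D. in_bucket n k (p a) \<and> count (mset S) a = j}"

definition faithful :: "nat set \<Rightarrow> (nat \<Rightarrow> real) \<Rightarrow> nat \<Rightarrow> nat list \<Rightarrow> bool" where
  "faithful D p n S \<longleftrightarrow>
     (\<forall>a\<in>D. \<bar>real n * p a - real (count (mset S) a)\<bar>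
              < max ((ln (real n)) powr 1.5) (sqrt (real n * p a * (ln (real n)) powr 1.5))) \<and>
     (\<forall>j k. real j < (ln (real n))\<^sup>2 \<longrightarrow>
              \<bar>B_poi (hist D p) n j k - real (B_S D p S n j k)\<bar> < real n powr 0.6)"

text \<open>Poisson-weighted median of the multiset S_h (h(x) copies of each x, weight poi(nx,j)).\<close>
definition pw_median :: "(real \<Rightarrow> nat) \<Rightarrow> nat \<Rightarrow> nat \<Rightarrow> real \<Rightarrow> bool" where
  "pw_median h j n m \<longleftrightarrow>
     (let W = (\<Sum>x\<in>{x. h x \<noteq> 0}. real (h x) * poi (real n * x) j) in
       (\<Sum>x\<in>{x. h x \<noteq> 0 \<and> x > m}. real (h x) * poi (real n * x) j) \<le> W / 2 \<and>
       (\<Sum>x\<in>{x. h x \<noteq> 0 \<and> x < m}. real (h x) * poi (real n * x) j) \<le> W / 2)"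

definition dev :: "nat \<Rightarrow> nat \<Rightarrow> (real \<Rightarrow> nat) \<Rightarrow> real \<Rightarrow> real" where
  "dev j n h m = (\<Sum>x\<in>{x. h x \<noteq> 0}. \<bar>x - m\<bar> * real (h x) * poi (real n * x) j)"

definition ms_median :: "real multiset \<Rightarrow> real \<Rightarrow> bool" where
  "ms_median M m \<longleftrightarrow>
     real (size (filter_mset (\<lambda>x. x > m) M)) \<le> real (size M) / 2 \<and>
     real (size (filter_mset (\<lambda>x. x < m) M)) \<le> real (size M) / 2"

definition S_j :: "nat set \<Rightarrow> (nat \<Rightarrow> real) \<Rightarrow> nat list \<Rightarrow> nat \<Rightarrow> real multiset" where
  "S_j D p S j = image_mset p (filter_mset (\<lambda>a. count (mset S) a = j) (mset_set D))"

definition sigma_j :: "real multiset \<Rightarrow> real \<Rightarrow> real" where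
  "sigma_j M m = sum_mset (image_mset (\<lambda>x. \<bar>x - m\<bar>) M)"

end

theory Submission
  imports Defs "HOL-Real_Asymp.Real_Asymp"
begin

(*
  For each j both quantities are minimal values of absolute-deviation functions of t:
  sigma_j minimises sdev j t = sum over the elements a seen j times of |p a - t|, and
  dev_j minimises pdev j t = sum over all a of poi (n p a) j * |p a - t|.  Faithfulness
  forces an element seen fewer than log^2 n times to have probability at most
  T ~ 4 log^2 n / n, while the elements of larger probability carry total Poisson weight
  at most n exp (- log^2 n); so both minimisers may be clipped to [0, T].  On [0, T] the
  two functions are compared bucket by bucket: inside a bucket of width w = 1 / (n log^2 n)
  every |p a - t| is within w of its value at the centre of the bucket, and the number of
  elements seen j times differs from the Poisson weight of the bucket by less than n^0.6.
  Summing over the O(log^4 n) buckets and the log^2 n values of j leaves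
  O(n^-0.4 log^6 n) + 2 w n = O(1 / log^2 n).
*)

lemma sum_power_div_fact_le_exp:
  fixes y :: real
  assumes "0 \<le> y" and "finite I"
  shows "(\<Sum>i\<in>I. y ^ i / fact i) \<le> exp y"
proof -
  have "(\<Sum>i\<in>I. y ^ i / fact i) \<le> (\<Sum>i. y ^ i / fact i)"
    using summable_exp_generic[of y] assms
    by (intro sum_le_suminf) (auto simp: divide_inverse mult.commute)
  also have "\<dots> = exp y"
    by (simp add: exp_def divide_inverse mult.commute)
  finally show ?thesis .
qed

lemma poi_nonneg: "0 \<le> lam \<Longrightarrow> 0 \<le> poi lam j"
  by (simp add: poi_def)

lemma poi_le_exp:
  assumes "0 \<le> lam"
  shows "poi lam j \<le> exp (real j - lam / 2)"
proof -
  have "(2::real) ^ j \<le> exp 1 ^ j"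
    using exp_ge_add_one_self[of 1] by (intro power_mono) auto
  then have two_pow: "(2::real) ^ j \<le> exp (real j)"
    by (simp add: exp_of_nat_mult[symmetric])
  have "lam ^ j / fact j = 2 ^ j * ((lam / 2) ^ j / fact j)"
    by (simp add: power_divide)
  also have "\<dots> \<le> exp (real j) * exp (lam / 2)"
    using sum_power_div_fact_le_exp[of "lam / 2" "{j}"] two_pow assms
    by (intro mult_mono) auto
  finally have "exp (- lam) * (lam ^ j / fact j) \<le> exp (- lam) * (exp (real j) * exp (lam / 2))"
    by (intro mult_left_mono) auto
  also have "\<dots> = exp (real j - lam / 2)"
    by (simp add: exp_add[symmetric])
  finally show ?thesis
    by (simp add: poi_def)
qed

lemma poi_le_mult_poi_pred:
  assumes "0 \<le> lam" and "1 \<le> j"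
  shows "poi lam j \<le> lam * poi lam (j - 1)"
proof -
  have "poi lam j = lam * (exp (- lam) * lam ^ (j - 1) / fact j)"
    using assms by (simp add: poi_def power_eq_if)
  also have "\<dots> \<le> lam * (exp (- lam) * lam ^ (j - 1) / fact (j - 1))"
    using assms by (intro mult_left_mono divide_left_mono fact_mono) auto
  finally show ?thesis
    by (simp add: poi_def)
qed

lemma sum_poi_le:
  assumes "0 \<le> lam" and "finite J" and "\<forall>j\<in>J. 1 \<le> j"
  shows "(\<Sum>j\<in>J. poi lam j) \<le> lam"
proof -
  have inj: "inj_on (\<lambda>j. j - 1) J"
    using assms(3) by (intro inj_on_diff_nat) blast
  have "(\<Sum>j\<in>J. poi lam j) \<le> (\<Sum>j\<in>J. lam * poi lam (j - 1))"
    using assms by (intro sum_mono poi_le_mult_poi_pred) auto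
  also have "\<dots> = lam * (\<Sum>i\<in>(\<lambda>j. j - 1) ` J. poi lam i)"
    unfolding sum.reindex[OF inj] by (simp add: sum_distrib_left)
  also have "\<dots> = lam * (exp (- lam) * (\<Sum>i\<in>(\<lambda>j. j - 1) ` J. lam ^ i / fact i))"
    by (simp add: poi_def sum_distrib_left)
  also have "\<dots> \<le> lam * (exp (- lam) * exp lam)"
    using assms by (intro mult_left_mono sum_power_div_fact_le_exp) auto
  also have "\<dots> = lam"
    by (simp add: exp_minus)
  finally show ?thesis .
qed

lemma sum_hist_eq:
  assumes "finite D"
  shows "(\<Sum>x\<in>{x. P x \<and> hist D p x \<noteq> 0}. real (hist D p x) * f x) = (\<Sum>a\<in>{a\<in>D. P (p a)}. f (p a))"
proof -
  let ?A = "{a\<in>D. P (p a)}"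
  have "(\<Sum>a\<in>?A. f (p a)) = (\<Sum>y\<in>p ` ?A. \<Sum>a\<in>{a\<in>?A. p a = y}. f (p a))"
    using assms by (intro sum.image_gen) auto
  also have "\<dots> = (\<Sum>y\<in>p ` ?A. real (hist D p y) * f y)"
  proof (rule sum.cong[OF refl])
    fix y
    assume "y \<in> p ` ?A"
    then have "{a\<in>?A. p a = y} = {a\<in>D. p a = y}"
      by auto
    then show "(\<Sum>a\<in>{a\<in>?A. p a = y}. f (p a)) = real (hist D p y) * f y"
      by (simp add: hist_def)
  qed
  also have "p ` ?A = {x. P x \<and> hist D p x \<noteq> 0}"
    using assms by (auto simp: hist_def card_eq_0_iff)
  finally show ?thesis
    by simp
qed

lemma weighted_median_le_right:
  fixes wt v :: "'a \<Rightarrow> real"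
  assumes "finite A" and "\<forall>a\<in>A. 0 \<le> wt a" and "m \<le> t"
    and above: "(\<Sum>a\<in>{a\<in>A. v a > m}. wt a) \<le> (\<Sum>a\<in>A. wt a) / 2"
  shows "(\<Sum>a\<in>A. wt a * \<bar>v a - m\<bar>) \<le> (\<Sum>a\<in>A. wt a * \<bar>v a - t\<bar>)"
proof -
  define s where "s a = (if v a > m then -1 else (1::real))" for a
  have "(\<Sum>a\<in>A. wt a * s a) = (\<Sum>a\<in>A. wt a - (if v a > m then 2 * wt a else 0))"
    by (intro sum.cong) (auto simp: s_def)
  also have "\<dots> = (\<Sum>a\<in>A. wt a) - 2 * (\<Sum>a\<in>{a\<in>A. v a > m}. wt a)"
    using assms(1) by (simp add: sum_subtractf sum.If_cases sum_distrib_left Int_def)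
  finally have "(\<Sum>a\<in>A. wt a * s a) = (\<Sum>a\<in>A. wt a) - 2 * (\<Sum>a\<in>{a\<in>A. v a > m}. wt a)" .
  then have balance: "0 \<le> (t - m) * (\<Sum>a\<in>A. wt a * s a)"
    using above \<open>m \<le> t\<close> by simp
  have "(\<Sum>a\<in>A. wt a * \<bar>v a - m\<bar>) + (t - m) * (\<Sum>a\<in>A. wt a * s a)
      = (\<Sum>a\<in>A. wt a * (\<bar>v a - m\<bar> + (t - m) * s a))"
    by (simp add: sum_distrib_left sum.distrib[symmetric] algebra_simps)
  also have "\<dots> \<le> (\<Sum>a\<in>A. wt a * \<bar>v a - t\<bar>)"
    using assms(2,3) by (intro sum_mono mult_left_mono) (auto simp: s_def abs_if)
  finally show ?thesis
    using balance by linarith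
qed

lemma weighted_median_minimizes:
  fixes wt v :: "'a \<Rightarrow> real"
  assumes "finite A" and "\<forall>a\<in>A. 0 \<le> wt a"
    and "(\<Sum>a\<in>{a\<in>A. v a > m}. wt a) \<le> (\<Sum>a\<in>A. wt a) / 2"
    and "(\<Sum>a\<in>{a\<in>A. v a < m}. wt a) \<le> (\<Sum>a\<in>A. wt a) / 2"
  shows "(\<Sum>a\<in>A. wt a * \<bar>v a - m\<bar>) \<le> (\<Sum>a\<in>A. wt a * \<bar>v a - t\<bar>)"
proof (cases "m \<le> t")
  case True
  show ?thesis
    by (rule weighted_median_le_right[OF assms(1,2) True assms(3)])
next
  case False
  have "(\<Sum>a\<in>{a\<in>A. - v a > - m}. wt a) \<le> (\<Sum>a\<in>A. wt a) / 2"
    using assms(4) by simp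
  then have "(\<Sum>a\<in>A. wt a * \<bar>- v a - - m\<bar>) \<le> (\<Sum>a\<in>A. wt a * \<bar>- v a - - t\<bar>)"
    using False by (intro weighted_median_le_right[OF assms(1,2)]) auto
  then show ?thesis
    by (simp add: abs_minus_commute)
qed

lemma sum_weighted_dist_near_center:
  fixes wt v :: "'a \<Rightarrow> real"
  assumes "\<forall>a\<in>A. 0 \<le> wt a" and "\<forall>a\<in>A. \<bar>v a - c\<bar> \<le> r"
  shows "\<bar>(\<Sum>a\<in>A. wt a * \<bar>v a - t\<bar>) - (\<Sum>a\<in>A. wt a) * \<bar>c - t\<bar>\<bar> \<le> r * (\<Sum>a\<in>A. wt a)"
proof -
  have "\<bar>(\<Sum>a\<in>A. wt a * \<bar>v a - t\<bar>) - (\<Sum>a\<in>A. wt a) * \<bar>c - t\<bar>\<bar>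
      = \<bar>\<Sum>a\<in>A. wt a * (\<bar>v a - t\<bar> - \<bar>c - t\<bar>)\<bar>"
    by (simp add: sum_distrib_right sum_subtractf algebra_simps)
  also have "\<dots> \<le> (\<Sum>a\<in>A. \<bar>wt a * (\<bar>v a - t\<bar> - \<bar>c - t\<bar>)\<bar>)"
    by (rule sum_abs)
  also have "\<dots> \<le> (\<Sum>a\<in>A. wt a * r)"
  proof (intro sum_mono)
    fix a
    assume "a \<in> A"
    have "\<bar>\<bar>v a - t\<bar> - \<bar>c - t\<bar>\<bar> \<le> \<bar>(v a - t) - (c - t)\<bar>"
      by (rule abs_triangle_ineq3)
    moreover have "\<bar>v a - c\<bar> \<le> r"
      using assms(2) \<open>a \<in> A\<close> by blast
    ultimately have "\<bar>\<bar>v a - t\<bar> - \<bar>c - t\<bar>\<bar> \<le> r"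
      by simp
    then show "\<bar>wt a * (\<bar>v a - t\<bar> - \<bar>c - t\<bar>)\<bar> \<le> wt a * r"
      using assms(1) \<open>a \<in> A\<close> by (simp add: abs_mult mult_left_mono)
  qed
  finally show ?thesis
    by (simp add: sum_distrib_left mult.commute)
qed

text \<open>Here \<open>x\<close> and \<open>y\<close> minimise \<open>F\<close> and \<open>G\<close>, the points \<open>t\<^sub>1, t\<^sub>2\<close> are \<open>y, x\<close>
  clipped into the region where \<open>F\<close> and \<open>G\<close> are close, and \<open>e\<close> is the cost of clipping \<open>y\<close>.\<close>
lemma minimal_values_close:
  fixes F G :: "real \<Rightarrow> real"
  assumes "F x \<le> F t\<^sub>1" and "G t\<^sub>1 \<le> G y + e" and "\<bar>F t\<^sub>1 - G t\<^sub>1\<bar> \<le> E"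
    and "G y \<le> G t\<^sub>2" and "F t\<^sub>2 \<le> F x" and "\<bar>F t\<^sub>2 - G t\<^sub>2\<bar> \<le> E" and "0 \<le> e"
  shows "\<bar>F x - G y\<bar> \<le> E + e"
  using assms unfolding abs_le_iff by linarith

lemma nat_less_real_eq_lessThan: "{j::nat. real j < x} = {..<nat \<lceil>x\<rceil>}"
  by (auto simp: zless_nat_eq_int_zless less_ceiling_iff)

locale faithful_sample =
  fixes n :: nat and D :: "nat set" and p :: "nat \<Rightarrow> real" and S :: "nat list"
  assumes n_ge_3: "n \<ge> 3" and distribution: "is_distribution D p"
    and length_S: "length S = n" and set_S: "set S \<subseteq> D" and faithful: "faithful D p n S"
begin

definition "L = ln (real n)"
definition "w = 1 / (real n * L\<^sup>2)"
definition "M = nat \<lceil>4 * L ^ 4\<rceil>"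
definition "T = (real M + 1) * w"
definition "tail = real n * exp (- (L\<^sup>2))"
definition "cnt a = count (mset S) a"
definition "bucket x = nat (\<lceil>x / w\<rceil> - 1)"
definition "seen j = {a\<in>D. cnt a = j}"
definition "low = {a\<in>D. p a \<le> T}"
definition "sdev j t = (\<Sum>a\<in>seen j. \<bar>p a - t\<bar>)"
definition "pdev j t = (\<Sum>a\<in>D. poi (real n * p a) j * \<bar>p a - t\<bar>)"
definition "pmass j = (\<Sum>a\<in>D. poi (real n * p a) j)"
definition "clip t = max 0 (min t T)"

lemma finite_D: "finite D"
  using distribution by (simp add: is_distribution_def)

lemma p_pos: "a \<in> D \<Longrightarrow> 0 < p a"
  using distribution by (simp add: is_distribution_def)

lemma sum_p: "(\<Sum>a\<in>D. p a) = 1"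
  using distribution by (simp add: is_distribution_def)

lemma p_le_1: "a \<in> D \<Longrightarrow> p a \<le> 1"
  using member_le_sum[of a D p] finite_D p_pos sum_p by (auto intro: less_imp_le)

lemma poi_D_nonneg: "a \<in> D \<Longrightarrow> 0 \<le> poi (real n * p a) j"
  using p_pos[of a] by (intro poi_nonneg) (simp add: less_imp_le)

lemma L_ge_1: "1 \<le> L"
proof -
  have "exp 1 \<le> real n"
    using exp_le n_ge_3 by linarith
  then show ?thesis
    using n_ge_3 by (simp add: L_def ln_ge_iff)
qed

lemma w_pos: "0 < w"
  using L_ge_1 n_ge_3 by (simp add: w_def)

lemma M_bounds: "4 * L ^ 4 \<le> real M" "real M \<le> 4 * L ^ 4 + 1"
  using L_ge_1 by (simp_all add: M_def)

lemma T_pos: "0 < T"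
  using w_pos by (simp add: T_def)

lemma nT_ge: "4 * L\<^sup>2 \<le> real n * T"
proof -
  have "4 * L\<^sup>2 = real n * ((4 * L ^ 4) * w)"
    using L_ge_1 n_ge_3 by (simp add: w_def field_simps power2_eq_square power4_eq_xxxx)
  also have "\<dots> \<le> real n * T"
    using M_bounds w_pos by (auto simp: T_def intro!: mult_left_mono mult_right_mono)
  finally show ?thesis .
qed

lemma tail_nonneg: "0 \<le> tail"
  by (simp add: tail_def)

lemma in_bucket_iff: "0 < x \<Longrightarrow> in_bucket n k x \<longleftrightarrow> k = bucket x"
proof -
  assume "0 < x"
  have "in_bucket n k x \<longleftrightarrow> real k < x / w \<and> x / w \<le> real k + 1"
    using w_pos by (simp add: in_bucket_def w_def L_def field_simps)
  also have "\<dots> \<longleftrightarrow> \<lceil>x / w\<rceil> = int k + 1"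
    by (simp add: ceiling_eq_iff)
  also have "\<dots> \<longleftrightarrow> k = bucket x"
    using \<open>0 < x\<close> w_pos by (auto simp: bucket_def)
  finally show ?thesis .
qed

lemma bucket_bounds:
  assumes "0 < x"
  shows "real (bucket x) * w < x" and "x \<le> (real (bucket x) + 1) * w"
  using in_bucket_iff[OF assms, of "bucket x"] by (simp_all add: in_bucket_def w_def L_def)

lemma bucket_le_M_iff: "0 < x \<Longrightarrow> bucket x \<le> M \<longleftrightarrow> x \<le> T"
proof
  assume "0 < x" "bucket x \<le> M"
  then show "x \<le> T"
    using bucket_bounds(2)[of x] w_pos by (auto simp: T_def intro: order.trans mult_right_mono)
next
  assume "0 < x" "x \<le> T"
  then have "\<lceil>x / w\<rceil> \<le> int M + 1"
    using w_pos by (simp add: ceiling_le_iff T_def field_simps)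
  then show "bucket x \<le> M"
    by (simp add: bucket_def)
qed

lemma bucket_center_dist:
  assumes "a \<in> D"
  shows "\<bar>p a - (real (bucket (p a)) + 1) * w\<bar> \<le> w"
  using bucket_bounds[OF p_pos[OF assms]] by (simp add: algebra_simps)

lemma faithful_count:
  "a \<in> D \<Longrightarrow> \<bar>real n * p a - real (cnt a)\<bar> < max (L powr 1.5) (sqrt (real n * p a * L powr 1.5))"
  using faithful unfolding faithful_def cnt_def L_def by blast

lemma faithful_bucket:
  "real j < L\<^sup>2 \<Longrightarrow> \<bar>B_poi (hist D p) n j k - real (B_S D p S n j k)\<bar> < real n powr 0.6"
  using faithful unfolding faithful_def L_def by blast

lemma mean_above_T:
  assumes "T < p a"
  shows "4 * L\<^sup>2 < real n * p a"
proof -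
  have "real n * T < real n * p a"
    using assms n_ge_3 by (intro mult_strict_left_mono) auto
  then show ?thesis
    using nT_ge by linarith
qed

lemma rarely_seen_le_T:
  assumes a: "a \<in> D" and cnt: "real (cnt a) < L\<^sup>2"
  shows "p a \<le> T"
proof (rule ccontr)
  assume "\<not> p a \<le> T"
  define lam where "lam = real n * p a"
  have lam: "4 * L\<^sup>2 < lam"
    using \<open>\<not> p a \<le> T\<close> mean_above_T by (simp add: lam_def)
  have L_powr: "L powr 1.5 \<le> L\<^sup>2"
  proof -
    have "L powr 1.5 \<le> L powr 2"
      using L_ge_1 by (intro powr_mono) auto
    then show ?thesis
      using L_ge_1 by (simp add: powr_numeral)
  qed
  have "lam * L powr 1.5 \<le> lam * (lam / 4)"
    using L_powr lam zero_le_power2[of L] by (intro mult_left_mono) linarith+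
  then have "sqrt (lam * L powr 1.5) \<le> sqrt ((lam / 2)\<^sup>2)"
    by (intro real_sqrt_le_mono) (simp add: power2_eq_square)
  then have sqrt_le: "sqrt (lam * L powr 1.5) \<le> lam / 2"
    using lam zero_le_power2[of L] by simp
  have "\<bar>lam - real (cnt a)\<bar> < max (L powr 1.5) (sqrt (lam * L powr 1.5))"
    using faithful_count[OF a] by (simp add: lam_def)
  also have "\<dots> \<le> lam / 2"
  proof -
    have "L powr 1.5 \<le> lam / 2"
      using L_powr lam zero_le_power2[of L] by linarith
    then show ?thesis
      using sqrt_le by simp
  qed
  finally show False
    using cnt lam by linarith
qed

text \<open>Elements above \<open>T\<close> have Poisson mean \<open>\<lambda> > 4 log\<^sup>2 n\<close>, so \<open>poi(\<lambda>, j) \<le> e\<^sup>j\<^sup>-\<^sup>\<lambda>\<^sup>/\<^sup>2\<close>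
  is tiny for \<open>j < log\<^sup>2 n\<close>; weighting the bound by \<open>\<lambda>\<close> makes it summable over \<open>D\<close>.\<close>
lemma poi_above_T:
  assumes "a \<in> D" and "T < p a" and "real j < L\<^sup>2"
  shows "poi (real n * p a) j \<le> real n * p a * exp (- (L\<^sup>2))"
proof -
  define lam where "lam = real n * p a"
  have lam: "4 * L\<^sup>2 < lam"
    using assms(2) mean_above_T by (simp add: lam_def)
  have "1 \<le> L\<^sup>2"
    using L_ge_1 by simp
  have "poi lam j \<le> exp (real j - lam / 2)"
    using lam zero_le_power2[of L] by (intro poi_le_exp) linarith
  also have "\<dots> \<le> exp (- (L\<^sup>2))"
    using lam assms(3) by simp
  also have "\<dots> \<le> lam * exp (- (L\<^sup>2))"
    using lam \<open>1 \<le> L\<^sup>2\<close> by simp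
  finally show ?thesis
    by (simp add: lam_def)
qed

lemma sum_poi_above_T:
  assumes "real j < L\<^sup>2"
  shows "(\<Sum>a\<in>D - low. poi (real n * p a) j) \<le> tail"
proof -
  have "(\<Sum>a\<in>D - low. poi (real n * p a) j) \<le> (\<Sum>a\<in>D - low. real n * p a * exp (- (L\<^sup>2)))"
    using poi_above_T assms by (intro sum_mono) (auto simp: low_def)
  also have "\<dots> \<le> (\<Sum>a\<in>D. real n * p a * exp (- (L\<^sup>2)))"
    using finite_D p_pos by (intro sum_mono2) (auto intro!: mult_nonneg_nonneg simp: less_imp_le)
  also have "\<dots> = tail"
    using sum_p by (simp add: tail_def sum_distrib_right[symmetric] sum_distrib_left[symmetric])
  finally show ?thesis .
qed

lemma B_S_eq: "B_S D p S n j k = card {a\<in>seen j. bucket (p a) = k}"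
  using p_pos in_bucket_iff by (auto simp: B_S_def seen_def cnt_def intro!: arg_cong[where f = card])

lemma B_poi_eq:
  assumes "k \<le> M"
  shows "B_poi (hist D p) n j k = (\<Sum>a\<in>{a\<in>low. bucket (p a) = k}. poi (real n * p a) j)"
proof -
  have "{a\<in>D. in_bucket n k (p a)} = {a\<in>low. bucket (p a) = k}"
    using p_pos in_bucket_iff bucket_le_M_iff assms by (auto simp: low_def)
  then show ?thesis
    using sum_hist_eq[OF finite_D, where P = "in_bucket n k" and f = "\<lambda>x. poi (real n * x) j"]
    by (simp add: B_poi_def)
qed

lemma bucket_dev_close:
  assumes "k \<le> M" and "real j < L\<^sup>2" and "0 \<le> t" and "t \<le> T"
  shows "\<bar>(\<Sum>a\<in>{a\<in>seen j. bucket (p a) = k}. \<bar>p a - t\<bar>)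
           - (\<Sum>a\<in>{a\<in>low. bucket (p a) = k}. poi (real n * p a) j * \<bar>p a - t\<bar>)\<bar>
         \<le> real n powr 0.6 * T
           + w * (real (card {a\<in>seen j. bucket (p a) = k})
                  + (\<Sum>a\<in>{a\<in>low. bucket (p a) = k}. poi (real n * p a) j))"
proof -
  define A where "A = {a\<in>seen j. bucket (p a) = k}"
  define R where "R = {a\<in>low. bucket (p a) = k}"
  define X where "X = (\<Sum>a\<in>A. \<bar>p a - t\<bar>)"
  define Y where "Y = (\<Sum>a\<in>R. poi (real n * p a) j * \<bar>p a - t\<bar>)"
  define b where "b = (\<Sum>a\<in>R. poi (real n * p a) j)"
  define c where "c = (real k + 1) * w"
  have "0 < c" and "c \<le> T"
    using w_pos assms(1) by (auto simp: c_def T_def intro: mult_right_mono)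
  then have d: "0 \<le> \<bar>c - t\<bar>" "\<bar>c - t\<bar> \<le> T"
    using assms(3,4) by auto
  have near: "\<bar>p a - c\<bar> \<le> w" if "a \<in> D" "bucket (p a) = k" for a
    using bucket_center_dist[OF that(1)] that(2) by (simp add: c_def)
  have "\<bar>(\<Sum>a\<in>A. 1 * \<bar>p a - t\<bar>) - (\<Sum>a\<in>A. 1) * \<bar>c - t\<bar>\<bar> \<le> w * (\<Sum>a\<in>A. 1)"
    using near by (intro sum_weighted_dist_near_center) (auto simp: A_def seen_def)
  then have X_near: "\<bar>X - real (card A) * \<bar>c - t\<bar>\<bar> \<le> w * real (card A)"
    by (simp add: X_def)
  have Y_near: "\<bar>Y - b * \<bar>c - t\<bar>\<bar> \<le> w * b"
    unfolding Y_def b_def using near poi_D_nonneg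
    by (intro sum_weighted_dist_near_center) (auto simp: R_def low_def)
  have "\<bar>real (card A) - b\<bar> < real n powr 0.6"
    using faithful_bucket[OF assms(2), of k] B_S_eq[of j k] B_poi_eq[OF assms(1), of j]
    by (simp add: A_def R_def b_def)
  then have "\<bar>real (card A) * \<bar>c - t\<bar> - b * \<bar>c - t\<bar>\<bar> \<le> real n powr 0.6 * T"
    using d by (simp add: left_diff_distrib[symmetric] abs_mult mult_mono)
  then have "\<bar>X - Y\<bar> \<le> real n powr 0.6 * T + w * (real (card A) + b)"
    using X_near Y_near by (simp add: abs_le_iff algebra_simps)
  then show ?thesis
    by (simp add: A_def R_def X_def Y_def b_def)
qed

lemma sum_group_buckets:
  assumes "A \<subseteq> low"
  shows "(\<Sum>k\<le>M. \<Sum>a\<in>{a\<in>A. bucket (p a) = k}. f a) = sum f A"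
proof (rule sum.group)
  show "finite A"
    using assms finite_D by (auto simp: low_def intro: finite_subset)
  show "(\<lambda>a. bucket (p a)) ` A \<subseteq> {..M}"
    using assms p_pos bucket_le_M_iff by (auto simp: low_def)
qed simp

lemma seen_subset_low: "real j < L\<^sup>2 \<Longrightarrow> seen j \<subseteq> low"
  using rarely_seen_le_T by (auto simp: seen_def low_def cnt_def)

lemma sum_above_T_dev:
  assumes "real j < L\<^sup>2" and "0 \<le> t" and "t \<le> T"
  shows "0 \<le> (\<Sum>a\<in>D - low. poi (real n * p a) j * \<bar>p a - t\<bar>)"
    and "(\<Sum>a\<in>D - low. poi (real n * p a) j * \<bar>p a - t\<bar>) \<le> tail"
proof -
  show "0 \<le> (\<Sum>a\<in>D - low. poi (real n * p a) j * \<bar>p a - t\<bar>)"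
    using poi_D_nonneg by (intro sum_nonneg) auto
  have "(\<Sum>a\<in>D - low. poi (real n * p a) j * \<bar>p a - t\<bar>) \<le> (\<Sum>a\<in>D - low. poi (real n * p a) j)"
  proof (intro sum_mono)
    fix a
    assume a: "a \<in> D - low"
    then have "\<bar>p a - t\<bar> \<le> 1"
      using assms p_le_1[of a] by (auto simp: low_def)
    then show "poi (real n * p a) j * \<bar>p a - t\<bar> \<le> poi (real n * p a) j"
      using poi_D_nonneg[of a j] a by (simp add: mult_left_le)
  qed
  also have "\<dots> \<le> tail"
    using sum_poi_above_T[OF assms(1)] .
  finally show "(\<Sum>a\<in>D - low. poi (real n * p a) j * \<bar>p a - t\<bar>) \<le> tail" .
qed

lemma sdev_pdev_close:
  assumes "real j < L\<^sup>2" and "0 \<le> t" and "t \<le> T"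
  shows "\<bar>sdev j t - pdev j t\<bar>
    \<le> (real M + 1) * real n powr 0.6 * T + w * (real (card (seen j)) + pmass j) + tail"
proof -
  let ?q = "\<lambda>a. poi (real n * p a) j"
  let ?A = "\<lambda>k. {a\<in>seen j. bucket (p a) = k}"
  let ?R = "\<lambda>k. {a\<in>low. bucket (p a) = k}"
  define high where "high = (\<Sum>a\<in>D - low. ?q a * \<bar>p a - t\<bar>)"
  have "low \<subseteq> D"
    by (auto simp: low_def)
  then have pdev_split: "pdev j t = (\<Sum>a\<in>low. ?q a * \<bar>p a - t\<bar>) + high"
    using finite_D by (simp add: pdev_def high_def sum.subset_diff[of low D])
  have "\<bar>sdev j t - (\<Sum>a\<in>low. ?q a * \<bar>p a - t\<bar>)\<bar>
      = \<bar>\<Sum>k\<le>M. (\<Sum>a\<in>?A k. \<bar>p a - t\<bar>) - (\<Sum>a\<in>?R k. ?q a * \<bar>p a - t\<bar>)\<bar>"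
    using seen_subset_low[OF assms(1)]
    by (simp add: sdev_def sum_subtractf sum_group_buckets)
  also have "\<dots> \<le> (\<Sum>k\<le>M. \<bar>(\<Sum>a\<in>?A k. \<bar>p a - t\<bar>) - (\<Sum>a\<in>?R k. ?q a * \<bar>p a - t\<bar>)\<bar>)"
    by (rule sum_abs)
  also have "\<dots> \<le> (\<Sum>k\<le>M. real n powr 0.6 * T + w * (real (card (?A k)) + (\<Sum>a\<in>?R k. ?q a)))"
    using assms by (intro sum_mono bucket_dev_close) auto
  also have "\<dots> = (real M + 1) * real n powr 0.6 * T + w * (real (card (seen j)) + (\<Sum>a\<in>low. ?q a))"
    using sum_group_buckets[OF seen_subset_low[OF assms(1)], of "\<lambda>_. 1::real"]
      sum_group_buckets[of low ?q]
    by (simp add: sum.distrib sum_distrib_left[symmetric])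
  also have "(\<Sum>a\<in>low. ?q a) \<le> pmass j"
    unfolding pmass_def using finite_D poi_D_nonneg \<open>low \<subseteq> D\<close> by (intro sum_mono2) auto
  finally have "\<bar>sdev j t - (\<Sum>a\<in>low. ?q a * \<bar>p a - t\<bar>)\<bar>
      \<le> (real M + 1) * real n powr 0.6 * T + w * (real (card (seen j)) + pmass j)"
    using w_pos by simp
  moreover have "0 \<le> high" and "high \<le> tail"
    using sum_above_T_dev[OF assms] by (simp_all add: high_def)
  ultimately show ?thesis
    unfolding pdev_split by (simp add: abs_le_iff)
qed

lemma S_j_eq: "S_j D p S j = image_mset p (mset_set (seen j))"
  using finite_D by (simp add: S_j_def seen_def cnt_def)

lemma sigma_j_eq_sdev: "sigma_j (S_j D p S j) t = sdev j t"
  by (simp add: sigma_j_def S_j_eq sdev_def sum_unfold_sum_mset multiset.map_comp o_def)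

lemma dev_eq_pdev: "dev j n (hist D p) t = pdev j t"
  using sum_hist_eq[OF finite_D, where P = "\<lambda>_. True" and f = "\<lambda>x. poi (real n * x) j * \<bar>x - t\<bar>"]
  by (simp add: dev_def pdev_def ac_simps)

lemma sdev_median_le:
  assumes "ms_median (S_j D p S j) m"
  shows "sdev j m \<le> sdev j t"
proof -
  have finite: "finite (seen j)"
    using finite_D by (simp add: seen_def)
  have size_filter: "real (size (filter_mset P (S_j D p S j))) = (\<Sum>a\<in>{a\<in>seen j. P (p a)}. 1)" for P
    using finite by (simp add: S_j_eq filter_mset_image_mset)
  have "(\<Sum>a\<in>seen j. 1 * \<bar>p a - m\<bar>) \<le> (\<Sum>a\<in>seen j. 1 * \<bar>p a - t\<bar>)"
    using assms size_filter[of "\<lambda>_. True"] finite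
    by (intro weighted_median_minimizes) (auto simp: ms_median_def size_filter)
  then show ?thesis
    by (simp add: sdev_def)
qed

lemma pdev_median_le:
  assumes "pw_median (hist D p) j n m"
  shows "pdev j m \<le> pdev j t"
proof -
  have weight_eq: "(\<Sum>x\<in>{x. hist D p x \<noteq> 0 \<and> P x}. real (hist D p x) * poi (real n * x) j)
      = (\<Sum>a\<in>{a\<in>D. P (p a)}. poi (real n * p a) j)" for P
    using sum_hist_eq[OF finite_D, where P = P and f = "\<lambda>x. poi (real n * x) j"]
    by (simp add: conj_commute)
  have "(\<Sum>a\<in>D. poi (real n * p a) j * \<bar>p a - m\<bar>) \<le> (\<Sum>a\<in>D. poi (real n * p a) j * \<bar>p a - t\<bar>)"
    using assms weight_eq[of "\<lambda>_. True"] weight_eq[of "\<lambda>x. x > m"] weight_eq[of "\<lambda>x. x < m"]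
      finite_D poi_D_nonneg
    by (intro weighted_median_minimizes) (auto simp: pw_median_def Let_def)
  then show ?thesis
    by (simp add: pdev_def)
qed

lemma clip_bounds: "0 \<le> clip t" "clip t \<le> T"
  using T_pos by (auto simp: clip_def)

text \<open>Clipping \<open>t\<close> into \<open>[0, T]\<close> does not increase its distance to any point of \<open>[0, T]\<close>,
  where all of \<open>seen j\<close> lies; for the other points it costs at most \<open>1\<close> each, hence at most
  their total Poisson weight in \<open>pdev\<close>.\<close>
lemma sdev_clip_le:
  assumes "real j < L\<^sup>2"
  shows "sdev j (clip t) \<le> sdev j t"
  unfolding sdev_def
proof (intro sum_mono)
  fix a
  assume "a \<in> seen j"
  then have "0 < p a" "p a \<le> T"
    using seen_subset_low[OF assms] p_pos by (auto simp: low_def)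
  then show "\<bar>p a - clip t\<bar> \<le> \<bar>p a - t\<bar>"
    by (auto simp: clip_def)
qed

lemma pdev_clip_le:
  assumes "real j < L\<^sup>2"
  shows "pdev j (clip t) \<le> pdev j t + tail"
proof -
  let ?q = "\<lambda>a. poi (real n * p a) j"
  have "?q a * \<bar>p a - clip t\<bar> \<le> ?q a * \<bar>p a - t\<bar> + (if a \<in> low then 0 else ?q a)"
    if "a \<in> D" for a
  proof -
    have "\<bar>p a - clip t\<bar> \<le> \<bar>p a - t\<bar> + (if a \<in> low then 0 else 1)"
      using p_pos[OF that] p_le_1[OF that] T_pos by (auto simp: clip_def low_def)
    then show ?thesis
      using poi_D_nonneg[OF that, of j] mult_left_mono by (fastforce simp: distrib_left)
  qed
  then have "pdev j (clip t) \<le> (\<Sum>a\<in>D. ?q a * \<bar>p a - t\<bar> + (if a \<in> low then 0 else ?q a))"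
    unfolding pdev_def by (intro sum_mono) auto
  also have "\<dots> = pdev j t + (\<Sum>a\<in>D - low. ?q a)"
    using finite_D by (simp add: pdev_def sum.distrib sum.If_cases Diff_eq)
  also have "\<dots> \<le> pdev j t + tail"
    using sum_poi_above_T[OF assms] by simp
  finally show ?thesis .
qed

lemma sigma_j_dev_close:
  assumes "real j < L\<^sup>2"
    and "pw_median (hist D p) j n m" and "ms_median (S_j D p S j) mS"
  shows "\<bar>sigma_j (S_j D p S j) mS - dev j n (hist D p) m\<bar>
    \<le> (real M + 1) * real n powr 0.6 * T + w * (real (card (seen j)) + pmass j) + 2 * tail"
  unfolding sigma_j_eq_sdev dev_eq_pdev
  using minimal_values_close[where F = "sdev j" and G = "pdev j",
      OF sdev_median_le[OF assms(3)] pdev_clip_le[OF assms(1)]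
         sdev_pdev_close[OF assms(1) clip_bounds] pdev_median_le[OF assms(2)]
         sdev_clip_le[OF assms(1)] sdev_pdev_close[OF assms(1) clip_bounds] tail_nonneg]
  by simp

lemma sum_card_seen_le:
  assumes "finite J" and "0 \<notin> J"
  shows "(\<Sum>j\<in>J. real (card (seen j))) \<le> real n"
proof -
  define B where "B = {a\<in>D. cnt a \<in> J}"
  have "finite B"
    using finite_D by (simp add: B_def)
  have "(\<Sum>j\<in>J. real (card (seen j))) = (\<Sum>j\<in>J. \<Sum>a\<in>{a\<in>B. cnt a = j}. 1)"
    by (intro sum.cong) (auto simp: B_def seen_def intro!: arg_cong[where f = card])
  also have "\<dots> = real (card B)"
    using sum.group[OF \<open>finite B\<close> assms(1), of cnt "\<lambda>_. 1::real"] by (auto simp: B_def)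
  also have "card B \<le> card (set S)"
    using assms(2) by (intro card_mono) (auto simp: B_def cnt_def, metis count_eq_zero_iff set_mset_mset)
  also have "\<dots> \<le> n"
    using card_length[of S] length_S by simp
  finally show ?thesis
    by simp
qed

lemma sum_pmass_le:
  assumes "finite J" and "0 \<notin> J"
  shows "(\<Sum>j\<in>J. pmass j) \<le> real n"
proof -
  have pos: "\<forall>j\<in>J. 1 \<le> j"
    using assms(2) by (metis less_one not_le)
  have "(\<Sum>j\<in>J. pmass j) = (\<Sum>a\<in>D. \<Sum>j\<in>J. poi (real n * p a) j)"
    unfolding pmass_def by (rule sum.swap)
  also have "\<dots> \<le> (\<Sum>a\<in>D. real n * p a)"
    using assms(1) pos p_pos by (intro sum_mono sum_poi_le) (auto simp: less_imp_le)
  also have "\<dots> = real n"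
    using sum_p by (simp add: sum_distrib_left[symmetric])
  finally show ?thesis .
qed

end

definition error_bound :: "nat \<Rightarrow> real" where
  "error_bound n = ((ln (real n))\<^sup>2 + 1) *
     ((4 * ln (real n) ^ 4 + 2)\<^sup>2 * real n powr 0.6 / (real n * (ln (real n))\<^sup>2)
      + 2 * real n * exp (- ((ln (real n))\<^sup>2)))"

lemma error_bound_small: "eventually (\<lambda>n. error_bound n \<le> 1 / (ln (real n))\<^sup>2) sequentially"
  unfolding error_bound_def by real_asymp

context faithful_sample
begin

lemma error_term_le_error_bound:
  "(real M + 1) * real n powr 0.6 * T + 2 * tail \<le> error_bound n / (L\<^sup>2 + 1)"
proof -
  have "real M + 1 \<le> 4 * L ^ 4 + 2" and "T \<le> (4 * L ^ 4 + 2) * w"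
    using M_bounds w_pos by (auto simp: T_def intro: mult_right_mono)
  then have "(real M + 1) * real n powr 0.6 * T \<le> (4 * L ^ 4 + 2) * real n powr 0.6 * ((4 * L ^ 4 + 2) * w)"
    using T_pos by (intro mult_mono) auto
  also have "\<dots> = (4 * L ^ 4 + 2)\<^sup>2 * real n powr 0.6 / (real n * L\<^sup>2)"
    by (simp add: w_def power2_eq_square)
  moreover have "error_bound n / (L\<^sup>2 + 1) = (4 * L ^ 4 + 2)\<^sup>2 * real n powr 0.6 / (real n * L\<^sup>2) + 2 * tail"
  proof -
    have "L\<^sup>2 + 1 \<noteq> 0"
      using zero_le_power2[of L] by linarith
    then show ?thesis
      unfolding error_bound_def L_def[symmetric] by (simp add: tail_def)
  qed
  ultimately show ?thesis
    by linarith
qed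

lemma sum_sigma_j_dev_le:
  assumes "\<forall>j. 1 \<le> j \<and> real j < L\<^sup>2 \<longrightarrow> pw_median (hist D p) j n (m j)"
    and "\<forall>j. 1 \<le> j \<and> real j < L\<^sup>2 \<longrightarrow> ms_median (S_j D p S j) (mS j)"
  shows "(\<Sum>j\<in>{j. 1 \<le> j \<and> real j < L\<^sup>2}. \<bar>sigma_j (S_j D p S j) (mS j) - dev j n (hist D p) (m j)\<bar>)
    \<le> 2 / L\<^sup>2 + error_bound n"
proof -
  define J where "J = {j. 1 \<le> j \<and> real j < L\<^sup>2}"
  define X where "X = (real M + 1) * real n powr 0.6 * T + 2 * tail"
  have J_sub: "J \<subseteq> {j. real j < L\<^sup>2}"
    by (auto simp: J_def)
  then have "finite J" and "0 \<notin> J"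
    by (auto simp: J_def nat_less_real_eq_lessThan intro: finite_subset)
  have "card J \<le> nat \<lceil>L\<^sup>2\<rceil>"
    using card_mono[OF _ J_sub] by (simp add: nat_less_real_eq_lessThan)
  moreover have "real (nat \<lceil>L\<^sup>2\<rceil>) \<le> L\<^sup>2 + 1"
    using ceiling_correct[of "L\<^sup>2"] by simp
  ultimately have card_J: "real (card J) \<le> L\<^sup>2 + 1"
    by linarith
  have "(\<Sum>j\<in>J. \<bar>sigma_j (S_j D p S j) (mS j) - dev j n (hist D p) (m j)\<bar>)
      \<le> (\<Sum>j\<in>J. X + w * (real (card (seen j)) + pmass j))"
  proof (intro sum_mono)
    fix j
    assume "j \<in> J"
    then have "\<bar>sigma_j (S_j D p S j) (mS j) - dev j n (hist D p) (m j)\<bar>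
        \<le> (real M + 1) * real n powr 0.6 * T + w * (real (card (seen j)) + pmass j) + 2 * tail"
      using assms by (intro sigma_j_dev_close) (auto simp: J_def)
    then show "\<bar>sigma_j (S_j D p S j) (mS j) - dev j n (hist D p) (m j)\<bar>
        \<le> X + w * (real (card (seen j)) + pmass j)"
      by (simp add: X_def)
  qed
  also have "\<dots> = real (card J) * X + w * ((\<Sum>j\<in>J. real (card (seen j))) + (\<Sum>j\<in>J. pmass j))"
    by (simp add: sum.distrib sum_distrib_left distrib_left)
  also have "\<dots> \<le> (L\<^sup>2 + 1) * X + w * (real n + real n)"
    using card_J sum_card_seen_le[OF \<open>finite J\<close> \<open>0 \<notin> J\<close>] sum_pmass_le[OF \<open>finite J\<close> \<open>0 \<notin> J\<close>]
      w_pos tail_nonneg T_pos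
    by (intro add_mono mult_right_mono mult_left_mono) (auto simp: X_def)
  also have "\<dots> \<le> error_bound n + 2 / L\<^sup>2"
  proof -
    have "0 < L\<^sup>2 + 1"
      using zero_le_power2[of L] by linarith
    then have "(L\<^sup>2 + 1) * X \<le> error_bound n"
      using error_term_le_error_bound by (simp add: X_def pos_le_divide_eq mult.commute)
    moreover have "w * (real n + real n) = 2 / L\<^sup>2"
      using L_ge_1 n_ge_3 by (simp add: w_def field_simps)
    ultimately show ?thesis
      by linarith
  qed
  finally show ?thesis
    by (simp add: J_def)
qed

end

theorem lemma3:
  shows "\<exists>C N. \<forall>n\<ge>N. \<forall>(D::nat set) p S m mS.
    is_distribution D p \<longrightarrow> length S = n \<longrightarrow> set S \<subseteq> D \<longrightarrow> faithful D p n S \<longrightarrow>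
    (\<forall>j. 1 \<le> j \<and> real j < (ln (real n))\<^sup>2 \<longrightarrow> pw_median (hist D p) j n (m j)) \<longrightarrow>
    (\<forall>j. 1 \<le> j \<and> real j < (ln (real n))\<^sup>2 \<longrightarrow> ms_median (S_j D p S j) (mS j)) \<longrightarrow>
    (\<Sum>j\<in>{j. 1 \<le> j \<and> real j < (ln (real n))\<^sup>2}.
        \<bar>sigma_j (S_j D p S j) (mS j) - dev j n (hist D p) (m j)\<bar>) \<le> C / (ln (real n))\<^sup>2"
proof -
  obtain N where N: "\<And>n. N \<le> n \<Longrightarrow> 3 \<le> n \<and> error_bound n \<le> 1 / (ln (real n))\<^sup>2"
    using eventually_conj[OF eventually_ge_at_top[of 3] error_bound_small]
    unfolding eventually_sequentially by blast
  show ?thesis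
  proof (intro exI[of _ "3::real"] exI[of _ N] allI impI)
    fix n D p S m mS
    assume "N \<le> n" and "is_distribution D p" "length S = n" "set S \<subseteq> D" "faithful D p n S"
      and medians: "\<forall>j. 1 \<le> j \<and> real j < (ln (real n))\<^sup>2 \<longrightarrow> pw_median (hist D p) j n (m j)"
        "\<forall>j. 1 \<le> j \<and> real j < (ln (real n))\<^sup>2 \<longrightarrow> ms_median (S_j D p S j) (mS j)"
    then interpret faithful_sample n D p S
      using N by unfold_locales auto
    show "(\<Sum>j\<in>{j. 1 \<le> j \<and> real j < (ln (real n))\<^sup>2}.
        \<bar>sigma_j (S_j D p S j) (mS j) - dev j n (hist D p) (m j)\<bar>) \<le> 3 / (ln (real n))\<^sup>2"
      using sum_sigma_j_dev_le[unfolded L_def, OF medians] N[OF \<open>N \<le> n\<close>] by simp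
  qed
qed

end
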